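(* Let $P,P',Q,S$ be programs and $B$ a Boolean expression such that $P'\equiv_B(P,B)$ and $Q\equiv_B(P,\neg B)$. If the operational triple $\{|P'|\}\ S\ \{|P|\}$ holds, then $\{|P|\}\ \mathbf{while}\ (B)\ \mathbf{do}\ S\ \mathbf{elihw}\ \{|Q|\}$ holds.
   Context: Programs are statements of a sequential imperative language with a standard small-step operational semantics over program states. $\mathrm{behs}(P)$ is the set of pairs (initial state, final state) of finite terminating executions of $P$; $(s,u)\in\mathrm{behs}(P;Q)$ iff there is $t$ with $(s,t)\in\mathrm{behs}(P)$ and $(t,u)\in\mathrm{behs}(Q)$. For a state $s$ and Boolean expression $B$, $s(B)\in\{\mathit{tt},\mathit{ff}\}$ is the (side-effect-free) value of $B$ in $s$. The loop $\mathbf{while}\ (B)\ \mathbf{do}\ S\ \mathbf{elihw}$ started in state $s$ terminates in $s$ if $s(B)=\mathit{ff}$, and otherwise executes $S$ and then repeats the loop from the resulting state. The post-state set is $\mathrm{pst}(P)=\{t:\exists s,\ (s,t)\in\mathrm{behs}(P)\}$. The operational triple $\{|P|\}\ S\ \{|Q|\}$ means $\mathrm{pst}(P;S)\subseteq\mathrm{pst}(Q)$. For programs $P',P$ and Boolean expression $B$, $P'\equiv_B(P,B)$ means $\mathrm{pst}(P')=\mathrm{pst}(P)\cap\{s : s(B)=\mathit{tt}\}$. *)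

theory Defs
  imports Main
begin

type_synonym 's bexp = "'s \<Rightarrow> bool"

datatype 's com =
    Skip
  | Basic "'s \<Rightarrow> 's"
  | Seq "'s com" "'s com"
  | Cond "'s bexp" "'s com" "'s com"
  | While "'s bexp" "'s com"

inductive small_step :: "'s com \<times> 's \<Rightarrow> 's com \<times> 's \<Rightarrow> bool" where
  Basic: "small_step (Basic f, s) (Skip, f s)"
| Seq1: "small_step (Seq Skip c, s) (c, s)"
| Seq2: "small_step (c1, s) (c1', s') \<Longrightarrow> small_step (Seq c1 c2, s) (Seq c1' c2, s')"
| CondT: "b s \<Longrightarrow> small_step (Cond b c1 c2, s) (c1, s)"
| CondF: "\<not> b s \<Longrightarrow> small_step (Cond b c1 c2, s) (c2, s)"
| WhileT: "b s \<Longrightarrow> small_step (While b c, s) (Seq c (While b c), s)"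
| WhileF: "\<not> b s \<Longrightarrow> small_step (While b c, s) (Skip, s)"

definition behs :: "'s com \<Rightarrow> ('s \<times> 's) set" where
  "behs P = {(s, t). small_step\<^sup>*\<^sup>* (P, s) (Skip, t)}"

definition pst :: "'s com \<Rightarrow> 's set" where
  "pst P = {t. \<exists>s. (s, t) \<in> behs P}"

definition op_triple :: "'s com \<Rightarrow> 's com \<Rightarrow> 's com \<Rightarrow> bool" where
  "op_triple P S Q \<longleftrightarrow> pst (Seq P S) \<subseteq> pst Q"

definition equiv_B :: "'s com \<Rightarrow> 's com \<Rightarrow> 's bexp \<Rightarrow> bool" where
  "equiv_B P' P B \<longleftrightarrow> pst P' = pst P \<inter> {s. B s}"

end

theory Submission
  imports Defs
begin

text \<open>The post-states of P;S are the images of the post-states of P under the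
behaviours of S. With the two hypotheses this makes the loop body preserve pst P on the states
where B holds, so pst P is a loop invariant; a terminating loop exits in a state where B fails,
which lies in pst P \<inter> {s. \<not> B s} = pst Q.\<close>

lemma Skip_final: "\<not> small_step (Skip, s) cs"
  by (auto elim: small_step.cases)

lemma relpowp_Skip:
  assumes "(small_step ^^ n) (Skip, s) (Skip, t)"
  shows "t = s"
proof (cases n)
  case 0
  with assms show ?thesis
    by simp
next
  case (Suc m)
  with assms show ?thesis
    by (metis Skip_final relpowp_Suc_D2)
qed

lemma star_Seq_left:
  "small_step\<^sup>*\<^sup>* (c1, s) (c1', s') \<Longrightarrow> small_step\<^sup>*\<^sup>* (Seq c1 c2, s) (Seq c1' c2, s')"
proof (induction rule: rtranclp_induct2)
  case (step c s'' c' s')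
  then show ?case
    by (meson rtranclp.rtrancl_into_rtrancl small_step.Seq2)
qed simp

lemma star_Seq:
  assumes "small_step\<^sup>*\<^sup>* (c1, s) (Skip, t)" and "small_step\<^sup>*\<^sup>* (c2, t) (Skip, u)"
  shows "small_step\<^sup>*\<^sup>* (Seq c1 c2, s) (Skip, u)"
proof -
  have "small_step\<^sup>*\<^sup>* (Seq c1 c2, s) (Seq Skip c2, t)"
    using assms(1) by (rule star_Seq_left)
  also have "small_step (Seq Skip c2, t) (c2, t)"
    by (rule small_step.Seq1)
  finally show ?thesis
    using assms(2) by simp
qed

text \<open>Step counts rather than reflexive transitive closure: the bound m + k < n is what the
strong induction over loop executions below needs.\<close>

lemma relpowp_Seq_SkipD:
  "(small_step ^^ n) (Seq c1 c2, s) (Skip, u) \<Longrightarrow>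
   \<exists>t m k. m + k < n \<and> (small_step ^^ m) (c1, s) (Skip, t) \<and> (small_step ^^ k) (c2, t) (Skip, u)"
proof (induction n arbitrary: c1 s)
  case (Suc n)
  then obtain cs where first: "small_step (Seq c1 c2, s) cs" and rest: "(small_step ^^ n) cs (Skip, u)"
    by (blast dest: relpowp_Suc_D2)
  from first show ?case
  proof (cases rule: small_step.cases)
    case Seq1
    with rest show ?thesis
      by (intro exI[of _ s] exI[of _ 0] exI[of _ n]) auto
  next
    case (Seq2 c1' s')
    with Suc.IH rest obtain t m k where "m + k < n" and c1': "(small_step ^^ m) (c1', s') (Skip, t)"
      and c2: "(small_step ^^ k) (c2, t) (Skip, u)"
      by blast
    from Seq2 c1' have "(small_step ^^ Suc m) (c1, s) (Skip, t)"
      by (blast intro: relpowp_Suc_I2)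
    moreover have "Suc m + k < Suc n"
      using \<open>m + k < n\<close> by simp
    ultimately show ?thesis
      using c2 by blast
  qed
qed simp

lemma behs_Seq: "behs (Seq P Q) = behs P O behs Q"
proof
  show "behs (Seq P Q) \<subseteq> behs P O behs Q"
  proof clarify
    fix s u assume "(s, u) \<in> behs (Seq P Q)"
    then obtain n where "(small_step ^^ n) (Seq P Q, s) (Skip, u)"
      by (auto simp: behs_def rtranclp_power)
    then show "(s, u) \<in> behs P O behs Q"
      by (auto simp: behs_def dest!: relpowp_Seq_SkipD intro: relpowp_imp_rtranclp)
  qed
  show "behs P O behs Q \<subseteq> behs (Seq P Q)"
    by (auto simp: behs_def intro: star_Seq)
qed

lemma pst_Seq: "pst (Seq P Q) = behs Q `` pst P"
  by (auto simp: pst_def behs_Seq)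

lemma op_triple_iff: "op_triple P S Q \<longleftrightarrow> behs S `` pst P \<subseteq> pst Q"
  by (simp add: op_triple_def pst_Seq)

lemma relpowp_While_invariant:
  assumes preserved: "behs S `` (I \<inter> {s. B s}) \<subseteq> I"
  shows "(small_step ^^ n) (While B S, t) (Skip, u) \<Longrightarrow> t \<in> I \<Longrightarrow> u \<in> I \<and> \<not> B u"
proof (induction n arbitrary: t rule: less_induct)
  case (less n)
  then obtain n' where n: "n = Suc n'"
    by (cases n) auto
  with less.prems obtain cs where first: "small_step (While B S, t) cs"
    and rest: "(small_step ^^ n') cs (Skip, u)"
    by (blast dest: relpowp_Suc_D2)
  from first show ?case
  proof (cases rule: small_step.cases)
    case WhileT
    with rest obtain t' m k where "m + k < n'" and body: "(small_step ^^ m) (S, t) (Skip, t')"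
      and loop: "(small_step ^^ k) (While B S, t') (Skip, u)"
      by (blast dest: relpowp_Seq_SkipD)
    from body have "(t, t') \<in> behs S"
      by (auto simp: behs_def intro: relpowp_imp_rtranclp)
    with preserved less.prems(2) WhileT have "t' \<in> I"
      by blast
    moreover have "k < n"
      using \<open>m + k < n'\<close> n by simp
    ultimately show ?thesis
      using less.IH loop by blast
  next
    case WhileF
    with rest less.prems(2) show ?thesis
      by (auto dest: relpowp_Skip)
  qed
qed

lemma behs_While_invariant:
  assumes "behs S `` (I \<inter> {s. B s}) \<subseteq> I"
  shows "behs (While B S) `` I \<subseteq> I \<inter> {s. \<not> B s}"
  using relpowp_While_invariant[OF assms]
  by (auto simp: behs_def rtranclp_power)

theorem theorem1:
  fixes P P' Q S :: "'s com" and B :: "'s bexp"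
  assumes "equiv_B P' P B"
    and "equiv_B Q P (\<lambda>s. \<not> B s)"
    and "op_triple P' S P"
  shows "op_triple P (While B S) Q"
proof -
  have "behs S `` (pst P \<inter> {s. B s}) \<subseteq> pst P"
    using assms(1,3) by (simp add: equiv_B_def op_triple_iff)
  then have "behs (While B S) `` pst P \<subseteq> pst P \<inter> {s. \<not> B s}"
    by (rule behs_While_invariant)
  with assms(2) show ?thesis
    by (simp add: equiv_B_def op_triple_iff)
qed

end
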